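(* Fix $x\in[0,1]$. The evaluation operator $E:\mathcal C^0([0,1])\to\mathbb R$, $E(\eta)=\varphi_\eta(x)$, is differentiable, with derivative $$\frac{\partial\varphi(x)}{\partial\eta}(\Delta\eta)=\left(\frac{\int_0^x\left[\int_0^s\Delta\eta\right]e^{\int_0^s\eta}ds}{\int_0^xe^{\int_0^s\eta}ds}-\frac{\int_0^1\left[\int_0^s\Delta\eta\right]e^{\int_0^s\eta}ds}{\int_0^1e^{\int_0^s\eta}ds}\right)\varphi(x),$$ where $\varphi=\varphi_\eta$. Moreover there exists $\varepsilon_0>0$ such that for all $\varepsilon\in(0,\varepsilon_0)$, if $\|D^2\varphi\|_{\mathcal C^0}<\varepsilon$ then $$\tfrac18\min\{\varphi(x),1-\varphi(x)\}\le\left|\frac{\partial\varphi(x)}{\partial\eta}\right|\le2\min\{\varphi(x),1-\varphi(x)\}.$$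
   Context: For $\eta\in\mathcal C^0([0,1])$, $\varphi_\eta(x)=\dfrac{\int_0^xe^{\int_0^s\eta(t)dt}ds}{\int_0^1e^{\int_0^s\eta(t)dt}ds}$ is the unique orientation-preserving diffeomorphism of $[0,1]$ with nonlinearity $N\varphi_\eta=D^2\varphi_\eta/D\varphi_\eta=\eta$; this identifies $\mathrm{Diff}^2_+([0,1])$ with $\mathcal C^0([0,1])$. $\left|\partial\varphi(x)/\partial\eta\right|$ denotes the operator norm of the derivative as a linear functional on $\mathcal C^0([0,1])$. *)

theory Defs
  imports "HOL-Analysis.Analysis"
begin

text \<open>C^0([0,1]) is represented by functions real => real that are continuous on {0..1};
  only their values on {0..1} matter. The norm is the sup norm on [0,1].\<close>

definition C0 :: "(real \<Rightarrow> real) set" where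
  "C0 = {h. continuous_on {0..1} h}"

definition c0_norm :: "(real \<Rightarrow> real) \<Rightarrow> real" where
  "c0_norm h = (SUP t\<in>{0..1}. \<bar>h t\<bar>)"

definition phi :: "(real \<Rightarrow> real) \<Rightarrow> real \<Rightarrow> real" where
  "phi \<eta> x = integral {0..x} (\<lambda>s. exp (integral {0..s} \<eta>))
              / integral {0..1} (\<lambda>s. exp (integral {0..s} \<eta>))"

definition D2phi :: "(real \<Rightarrow> real) \<Rightarrow> real \<Rightarrow> real" where
  "D2phi \<eta> t = vector_derivative
      (\<lambda>u. vector_derivative (phi \<eta>) (at u within {0..1})) (at t within {0..1})"

definition dphi :: "(real \<Rightarrow> real) \<Rightarrow> real \<Rightarrow> (real \<Rightarrow> real) \<Rightarrow> real" where
  "dphi \<eta> x \<Delta> =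
     (integral {0..x} (\<lambda>s. integral {0..s} \<Delta> * exp (integral {0..s} \<eta>))
        / integral {0..x} (\<lambda>s. exp (integral {0..s} \<eta>))
      - integral {0..1} (\<lambda>s. integral {0..s} \<Delta> * exp (integral {0..s} \<eta>))
        / integral {0..1} (\<lambda>s. exp (integral {0..s} \<eta>))) * phi \<eta> x"

definition c0_bounded_linear :: "((real \<Rightarrow> real) \<Rightarrow> real) \<Rightarrow> bool" where
  "c0_bounded_linear L \<longleftrightarrow>
     (\<forall>h\<in>C0. \<forall>g\<in>C0. L (\<lambda>t. h t + g t) = L h + L g) \<and>
     (\<forall>h\<in>C0. \<forall>c. L (\<lambda>t. c * h t) = c * L h) \<and>
     (\<exists>K. \<forall>h\<in>C0. \<bar>L h\<bar> \<le> K * c0_norm h)"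

definition c0_opnorm :: "((real \<Rightarrow> real) \<Rightarrow> real) \<Rightarrow> real" where
  "c0_opnorm L = (SUP h\<in>{h\<in>C0. c0_norm h \<le> 1}. \<bar>L h\<bar>)"

definition c0_has_derivative ::
    "((real \<Rightarrow> real) \<Rightarrow> real) \<Rightarrow> ((real \<Rightarrow> real) \<Rightarrow> real) \<Rightarrow> (real \<Rightarrow> real) \<Rightarrow> bool" where
  "c0_has_derivative E L \<eta> \<longleftrightarrow> c0_bounded_linear L \<and>
     (\<forall>e>0. \<exists>d>0. \<forall>h\<in>C0. c0_norm h < d \<longrightarrow>
        \<bar>E (\<lambda>t. \<eta> t + h t) - E \<eta> - L h\<bar> \<le> e * c0_norm h)"

end

theory Submission
  imports Defs
begin

(* Write w(s) = exp (int_0^s \<eta>) and A(y) = int_0^y w, so that phi \<eta> x = A(x) / A(1).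
   Replacing \<eta> by \<eta> + h multiplies w(s) by exp (int_0^s h) = 1 + int_0^s h + O(|h|^2),
   with |h| the sup norm;
   hence A(y) moves by B_h(y) = int_0^y (int_0^s h) w(s) ds up to O(|h|^2 A(y)), and
   linearising the quotient gives the derivative (B_h(x) - phi(x) B_h(1)) / A(1).
   As |int_0^s h| <= |h|, the splitting
     B_h(x) - phi B_h(1) = (1 - phi) B_h(x) - phi (B_h(1) - B_h(x))
   bounds the derivative by 2 |h| phi (1 - phi) <= 2 |h| min phi (1 - phi).
   For the lower bound test h = 1. The density phi' = w / A(1) has mean 1 on [0,1] and
   Lipschitz constant |D^2 phi|, so it stays within 1/20 of 1; then the derivative in
   direction 1 stays close to its value -x(1-x)/2 at \<eta> = 0, whose size is at least
   min x (1-x) / 4. *)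

lemma abs_exp_minus_one_minus_le_square:
  fixes z :: real
  assumes "\<bar>z\<bar> \<le> 1"
  shows "\<bar>exp z - 1 - z\<bar> \<le> z\<^sup>2"
proof -
  have "exp z \<le> 1 + z + z\<^sup>2"
  proof (cases "0 \<le> z")
    case True
    with assms show ?thesis by (simp add: exp_bound)
  next
    case False
    have "exp z * (1 - z) \<le> exp z * exp (- z)"
      using exp_ge_add_one_self[of "- z"] by (intro mult_left_mono) auto
    also have "\<dots> = 1"
      by (simp add: exp_minus)
    also have "\<dots> \<le> (1 + z + z\<^sup>2) * (1 - z)"
    proof -
      have "z ^ 3 \<le> 0"
        using False by (simp add: power_le_zero_eq)
      then show ?thesis
        by (simp add: algebra_simps power2_eq_square power3_eq_cube)
    qed
    finally show ?thesis
      using False by (simp add: mult_le_cancel_right)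
  qed
  then show ?thesis
    using exp_ge_add_one_self[of z] zero_le_power2[of z] unfolding abs_le_iff by linarith
qed

lemma min_compl_bounds:
  fixes a :: real
  assumes "0 \<le> a" "a \<le> 1"
  shows "a * (1 - a) \<le> min a (1 - a)" and "min a (1 - a) \<le> 2 * (a * (1 - a))"
proof -
  show "a * (1 - a) \<le> min a (1 - a)"
    using assms by (simp add: mult_left_le mult_left_le_one_le)
  show "min a (1 - a) \<le> 2 * (a * (1 - a))"
  proof (cases "a \<le> 1/2")
    case True
    then have "a * 1 \<le> a * (2 * (1 - a))"
      using assms by (intro mult_left_mono) auto
    with True show ?thesis by (simp add: min_def algebra_simps)
  next
    case False
    then have "1 * (1 - a) \<le> (2 * a) * (1 - a)"
      using assms by (intro mult_right_mono) auto
    with False show ?thesis by (simp add: min_def algebra_simps)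
  qed
qed

lemma abs_quotient_perturbation_le:
  fixes a c B1 B2 r1 r2 N :: real
  assumes ac: "0 \<le> a" "a \<le> c" "0 < c" and N: "0 \<le> N" "N \<le> 1/8"
    and B: "\<bar>B1\<bar> \<le> N * a" "\<bar>B2\<bar> \<le> N * c"
    and r: "\<bar>r1\<bar> \<le> N\<^sup>2 * a" "\<bar>r2\<bar> \<le> N\<^sup>2 * c"
  shows "\<bar>(a + B1 + r1) / (c + B2 + r2) - a / c - (B1 - a / c * B2) / c\<bar> \<le> 8 * N\<^sup>2"
proof -
  define \<alpha> where "\<alpha> = a / c"
  define b1 where "b1 = B1 / c"
  define b2 where "b2 = B2 / c"
  define \<rho>1 where "\<rho>1 = r1 / c"
  define \<rho>2 where "\<rho>2 = r2 / c"
  define d where "d = b2 + \<rho>2"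
  have \<alpha>: "0 \<le> \<alpha>" "\<alpha> \<le> 1"
    using ac by (auto simp: \<alpha>_def)
  have b1: "\<bar>b1\<bar> \<le> N" and b2: "\<bar>b2\<bar> \<le> N"
    and \<rho>1: "\<bar>\<rho>1\<bar> \<le> N\<^sup>2" and \<rho>2: "\<bar>\<rho>2\<bar> \<le> N\<^sup>2"
    using ac B r N mult_left_mono[OF \<open>a \<le> c\<close>, of N] mult_left_mono[OF \<open>a \<le> c\<close>, of "N\<^sup>2"]
    by (auto simp: b1_def b2_def \<rho>1_def \<rho>2_def field_simps)
  have "N\<^sup>2 \<le> N / 8"
    using N mult_left_mono[of "8 * N" 1 N] by (simp add: power2_eq_square algebra_simps)
  then have d: "\<bar>d\<bar> \<le> 2 * N" and d_pos: "3/4 \<le> 1 + d"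
    using b2 \<rho>2 N unfolding d_def by linarith+
  have "a + B1 + r1 = c * (\<alpha> + b1 + \<rho>1)" "c + B2 + r2 = c * (1 + d)"
    using ac by (simp_all add: \<alpha>_def b1_def b2_def \<rho>1_def \<rho>2_def d_def field_simps)
  then have "(a + B1 + r1) / (c + B2 + r2) - a / c - (B1 - a / c * B2) / c
      = (\<alpha> + b1 + \<rho>1) / (1 + d) - \<alpha> - (b1 - \<alpha> * b2)"
    using ac by (simp add: \<alpha>_def b1_def b2_def diff_divide_distrib)
  also have "\<dots> = (\<rho>1 - \<alpha> * \<rho>2 - b1 * d + \<alpha> * b2 * d) / (1 + d)"
    using d_pos by (simp add: field_simps d_def)
  finally have eq: "(a + B1 + r1) / (c + B2 + r2) - a / c - (B1 - a / c * B2) / c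
      = (\<rho>1 - \<alpha> * \<rho>2 - b1 * d + \<alpha> * b2 * d) / (1 + d)" .
  have "\<bar>\<alpha> * \<rho>2\<bar> \<le> 1 * N\<^sup>2" "\<bar>b1 * d\<bar> \<le> N * (2 * N)" "\<bar>\<alpha> * b2 * d\<bar> \<le> 1 * N * (2 * N)"
    using \<alpha> b1 b2 \<rho>2 d N unfolding abs_mult by (intro mult_mono; simp)+
  then have "\<bar>\<rho>1 - \<alpha> * \<rho>2 - b1 * d + \<alpha> * b2 * d\<bar> \<le> 8 * N\<^sup>2 * (3/4)"
    using \<rho>1 by (simp add: power2_eq_square)
  also have "\<dots> \<le> 8 * N\<^sup>2 * (1 + d)"
    using d_pos by (intro mult_left_mono) auto
  finally show ?thesis
    unfolding eq using d_pos by (simp add: pos_divide_le_eq)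
qed

section \<open>Sup norm and integrals on the unit interval\<close>

lemma abs_le_c0_norm:
  assumes "continuous_on {0..1} h" "t \<in> {0..1}"
  shows "\<bar>h t\<bar> \<le> c0_norm h"
proof -
  have "compact ((\<lambda>t. \<bar>h t\<bar>) ` {0..1})"
    by (intro compact_continuous_image continuous_on_rabs assms) auto
  then have "bdd_above ((\<lambda>t. \<bar>h t\<bar>) ` {0..1})"
    by (intro bounded_imp_bdd_above compact_imp_bounded)
  then show ?thesis
    unfolding c0_norm_def using assms(2) by (rule cSUP_upper2) simp
qed

lemma c0_norm_nonneg: "continuous_on {0..1} h \<Longrightarrow> 0 \<le> c0_norm h"
  using abs_le_c0_norm[of h 0] by fastforce

lemma c0_norm_const [simp]: "c0_norm (\<lambda>t. k) = \<bar>k\<bar>"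
  unfolding c0_norm_def by simp

lemma c0_opnorm_le:
  assumes "\<And>h. h \<in> C0 \<Longrightarrow> c0_norm h \<le> 1 \<Longrightarrow> \<bar>L h\<bar> \<le> K"
  shows "c0_opnorm L \<le> K"
  unfolding c0_opnorm_def
proof (rule cSUP_least)
  have "(\<lambda>t. 0) \<in> {h \<in> C0. c0_norm h \<le> 1}"
    by (simp add: C0_def)
  then show "{h \<in> C0. c0_norm h \<le> 1} \<noteq> {}"
    by blast
qed (use assms in auto)

lemma abs_le_c0_opnorm:
  assumes "\<And>h. h \<in> C0 \<Longrightarrow> c0_norm h \<le> 1 \<Longrightarrow> \<bar>L h\<bar> \<le> K"
    and "h \<in> C0" "c0_norm h \<le> 1"
  shows "\<bar>L h\<bar> \<le> c0_opnorm L"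
  unfolding c0_opnorm_def
  by (rule cSUP_upper) (use assms in \<open>auto intro!: bdd_aboveI2\<close>)

lemma integrable_on_unit_subinterval:
  fixes f :: "real \<Rightarrow> real"
  assumes "continuous_on {0..1} f" "0 \<le> y" "z \<le> 1"
  shows "f integrable_on {y..z}"
  using assms by (intro integrable_continuous_real) (auto elim: continuous_on_subset)

lemma abs_integral_le_mult_integral:
  fixes f g :: "real \<Rightarrow> real"
  assumes "f integrable_on S" "g integrable_on S" "\<And>s. s \<in> S \<Longrightarrow> \<bar>f s\<bar> \<le> K * g s"
  shows "\<bar>integral S f\<bar> \<le> K * integral S g"
  using integral_norm_bound_integral[of f S "\<lambda>s. K * g s"] integrable_on_cmult_left[of g S K] assms
  by simp

lemma integral_le_on_unit_subinterval:
  fixes f g :: "real \<Rightarrow> real"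
  assumes "continuous_on {0..1} f" "continuous_on {0..1} g" "0 \<le> y" "z \<le> 1"
    and "\<And>s. s \<in> {y..z} \<Longrightarrow> f s \<le> g s"
  shows "integral {y..z} f \<le> integral {y..z} g"
  using assms by (intro integral_le integrable_on_unit_subinterval) auto

lemma continuous_on_primitive [continuous_intros]:
  fixes f :: "real \<Rightarrow> real"
  shows "continuous_on {0..1} f \<Longrightarrow> continuous_on {0..1} (\<lambda>s. integral {0..s} f)"
  by (intro indefinite_integral_continuous_1 integrable_continuous_real)

lemma abs_primitive_le_c0_norm:
  assumes "continuous_on {0..1} h" "s \<in> {0..1}"
  shows "\<bar>integral {0..s} h\<bar> \<le> c0_norm h"
proof -
  have "\<bar>integral {0..s} h\<bar> \<le> c0_norm h * integral {0..s} (\<lambda>_. 1)"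
    using assms abs_le_c0_norm[OF assms(1)]
    by (intro abs_integral_le_mult_integral integrable_on_unit_subinterval) auto
  also have "\<dots> \<le> c0_norm h"
    using assms c0_norm_nonneg[OF assms(1)] by (simp add: mult_left_le)
  finally show ?thesis .
qed

lemma primitive_add:
  fixes h g :: "real \<Rightarrow> real"
  assumes "continuous_on {0..1} h" "continuous_on {0..1} g" "s \<in> {0..1}"
  shows "integral {0..s} (\<lambda>t. h t + g t) = integral {0..s} h + integral {0..s} g"
  using assms by (intro integral_add integrable_on_unit_subinterval) auto

section \<open>Varying the nonlinearity\<close>

(* In the notation above: w = exp_prim \<eta>, A = phi_num \<eta> and B_h = phi_num_lin \<eta> h. *)

definition exp_prim :: "(real \<Rightarrow> real) \<Rightarrow> real \<Rightarrow> real" where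
  "exp_prim \<eta> s = exp (integral {0..s} \<eta>)"

definition phi_num :: "(real \<Rightarrow> real) \<Rightarrow> real \<Rightarrow> real" where
  "phi_num \<eta> y = integral {0..y} (exp_prim \<eta>)"

definition phi_num_lin :: "(real \<Rightarrow> real) \<Rightarrow> (real \<Rightarrow> real) \<Rightarrow> real \<Rightarrow> real" where
  "phi_num_lin \<eta> h y = integral {0..y} (\<lambda>s. integral {0..s} h * exp_prim \<eta> s)"

definition phi_num_rem :: "(real \<Rightarrow> real) \<Rightarrow> (real \<Rightarrow> real) \<Rightarrow> real \<Rightarrow> real" where
  "phi_num_rem \<eta> h y =
     integral {0..y} (\<lambda>s. exp_prim \<eta> s * (exp (integral {0..s} h) - 1 - integral {0..s} h))"

lemma exp_prim_pos: "0 < exp_prim \<eta> s"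
  by (simp add: exp_prim_def)

lemma continuous_on_exp_prim [continuous_intros]:
  "continuous_on {0..1} \<eta> \<Longrightarrow> continuous_on {0..1} (exp_prim \<eta>)"
  unfolding exp_prim_def[abs_def] by (intro continuous_on_exp continuous_on_primitive)

lemma phi_eq_phi_num: "phi \<eta> x = phi_num \<eta> x / phi_num \<eta> 1"
  by (simp add: phi_def phi_num_def exp_prim_def[abs_def])

lemma phi_num_nonneg:
  assumes "continuous_on {0..1} \<eta>" "y \<in> {0..1}"
  shows "0 \<le> phi_num \<eta> y"
  unfolding phi_num_def using assms exp_prim_pos less_imp_le
  by (intro integral_nonneg integrable_on_unit_subinterval continuous_on_exp_prim) auto

lemma phi_num_one_minus:
  assumes "continuous_on {0..1} \<eta>" "y \<in> {0..1}"
  shows "phi_num \<eta> 1 - phi_num \<eta> y = integral {y..1} (exp_prim \<eta>)"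
  unfolding phi_num_def
  using assms integrable_on_unit_subinterval[OF continuous_on_exp_prim[OF assms(1)], of 0 1]
    Henstock_Kurzweil_Integration.integral_combine[where f="exp_prim \<eta>" and a=0 and c=y and b=1]
  by auto

lemma phi_num_le_phi_num_one:
  assumes "continuous_on {0..1} \<eta>" "y \<in> {0..1}"
  shows "phi_num \<eta> y \<le> phi_num \<eta> 1"
proof -
  have "0 \<le> integral {y..1} (exp_prim \<eta>)"
    using assms exp_prim_pos less_imp_le
    by (intro integral_nonneg integrable_on_unit_subinterval continuous_on_exp_prim) auto
  then show ?thesis
    using phi_num_one_minus[OF assms] by simp
qed

lemma phi_num_one_pos:
  assumes "continuous_on {0..1} \<eta>"
  shows "0 < phi_num \<eta> 1"
proof -
  have "integral {0..1} (\<lambda>_::real. exp (- c0_norm \<eta>)) \<le> phi_num \<eta> 1"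
    unfolding phi_num_def
  proof (rule integral_le_on_unit_subinterval)
    fix s :: real
    assume "s \<in> {0..1}"
    then show "exp (- c0_norm \<eta>) \<le> exp_prim \<eta> s"
      using abs_primitive_le_c0_norm[OF assms \<open>s \<in> {0..1}\<close>] by (simp add: exp_prim_def abs_le_iff)
  qed (use assms continuous_on_exp_prim in auto)
  then show ?thesis
    by (simp add: order.strict_trans2[OF exp_gt_zero])
qed

lemma phi_bounds:
  assumes "continuous_on {0..1} \<eta>" "x \<in> {0..1}"
  shows "0 \<le> phi \<eta> x" "phi \<eta> x \<le> 1"
  unfolding phi_eq_phi_num
  using phi_num_nonneg[OF assms] phi_num_le_phi_num_one[OF assms] phi_num_one_pos[OF assms(1)]
  by auto

lemma phi_num_perturb:
  assumes "continuous_on {0..1} \<eta>" "continuous_on {0..1} h" "y \<in> {0..1}"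
  shows "phi_num (\<lambda>t. \<eta> t + h t) y = phi_num \<eta> y + phi_num_lin \<eta> h y + phi_num_rem \<eta> h y"
proof -
  have "phi_num (\<lambda>t. \<eta> t + h t) y = integral {0..y} (\<lambda>s. exp_prim \<eta> s
      + integral {0..s} h * exp_prim \<eta> s
      + exp_prim \<eta> s * (exp (integral {0..s} h) - 1 - integral {0..s} h))"
    unfolding phi_num_def
  proof (rule integral_cong)
    fix s
    assume "s \<in> {0..y}"
    then have "s \<in> {0..1}"
      using assms(3) by auto
    then show "exp_prim (\<lambda>t. \<eta> t + h t) s = exp_prim \<eta> s + integral {0..s} h * exp_prim \<eta> s
      + exp_prim \<eta> s * (exp (integral {0..s} h) - 1 - integral {0..s} h)"
      using primitive_add[OF assms(1,2)] by (simp add: exp_prim_def exp_add algebra_simps)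
  qed
  also have "\<dots> = phi_num \<eta> y + phi_num_lin \<eta> h y + phi_num_rem \<eta> h y"
  proof -
    have "exp_prim \<eta> integrable_on {0..y}"
      and "(\<lambda>s. integral {0..s} h * exp_prim \<eta> s) integrable_on {0..y}"
      and "(\<lambda>s. exp_prim \<eta> s * (exp (integral {0..s} h) - 1 - integral {0..s} h)) integrable_on {0..y}"
      using assms by (intro integrable_on_unit_subinterval continuous_intros; simp)+
    then show ?thesis
      unfolding phi_num_def phi_num_lin_def phi_num_rem_def by (simp add: integral_add integrable_add)
  qed
  finally show ?thesis .
qed

lemma abs_phi_num_rem_le:
  assumes "continuous_on {0..1} \<eta>" "continuous_on {0..1} h" "y \<in> {0..1}" "c0_norm h \<le> 1"
  shows "\<bar>phi_num_rem \<eta> h y\<bar> \<le> (c0_norm h)\<^sup>2 * phi_num \<eta> y"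
  unfolding phi_num_rem_def phi_num_def
proof (rule abs_integral_le_mult_integral)
  fix s
  assume "s \<in> {0..y}"
  then have H: "\<bar>integral {0..s} h\<bar> \<le> c0_norm h"
    using assms abs_primitive_le_c0_norm by auto
  have "\<bar>exp (integral {0..s} h) - 1 - integral {0..s} h\<bar> \<le> (integral {0..s} h)\<^sup>2"
    using H assms(4) by (intro abs_exp_minus_one_minus_le_square) auto
  also have "\<dots> \<le> (c0_norm h)\<^sup>2"
    using H by (metis abs_ge_zero power2_abs power_mono)
  finally show "\<bar>exp_prim \<eta> s * (exp (integral {0..s} h) - 1 - integral {0..s} h)\<bar>
      \<le> (c0_norm h)\<^sup>2 * exp_prim \<eta> s"
    using exp_prim_pos[of \<eta> s] by (simp add: abs_mult mult.commute)
qed (use assms in \<open>intro integrable_on_unit_subinterval continuous_intros; simp\<close>)+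

lemma abs_integral_primitive_mult_exp_prim_le:
  assumes "continuous_on {0..1} \<eta>" "continuous_on {0..1} h" "0 \<le> y" "z \<le> 1"
  shows "\<bar>integral {y..z} (\<lambda>s. integral {0..s} h * exp_prim \<eta> s)\<bar>
    \<le> c0_norm h * integral {y..z} (exp_prim \<eta>)"
proof (rule abs_integral_le_mult_integral)
  fix s
  assume "s \<in> {y..z}"
  then have "\<bar>integral {0..s} h\<bar> \<le> c0_norm h"
    using assms abs_primitive_le_c0_norm by auto
  then show "\<bar>integral {0..s} h * exp_prim \<eta> s\<bar> \<le> c0_norm h * exp_prim \<eta> s"
    using exp_prim_pos[of \<eta> s] by (simp add: abs_mult mult_right_mono)
qed (use assms in \<open>intro integrable_on_unit_subinterval continuous_intros; simp\<close>)+

lemma abs_phi_num_lin_le: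
  assumes "continuous_on {0..1} \<eta>" "continuous_on {0..1} h" "y \<in> {0..1}"
  shows "\<bar>phi_num_lin \<eta> h y\<bar> \<le> c0_norm h * phi_num \<eta> y"
  unfolding phi_num_lin_def phi_num_def
  using assms by (intro abs_integral_primitive_mult_exp_prim_le) auto

lemma abs_phi_num_lin_one_minus_le:
  assumes "continuous_on {0..1} \<eta>" "continuous_on {0..1} h" "y \<in> {0..1}"
  shows "\<bar>phi_num_lin \<eta> h 1 - phi_num_lin \<eta> h y\<bar> \<le> c0_norm h * (phi_num \<eta> 1 - phi_num \<eta> y)"
proof -
  have "(\<lambda>s. integral {0..s} h * exp_prim \<eta> s) integrable_on {0..1}"
    using assms by (intro integrable_on_unit_subinterval continuous_intros) auto
  then have "phi_num_lin \<eta> h 1 - phi_num_lin \<eta> h y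
      = integral {y..1} (\<lambda>s. integral {0..s} h * exp_prim \<eta> s)"
    unfolding phi_num_lin_def using assms(3)
      Henstock_Kurzweil_Integration.integral_combine[where a=0 and c=y and b=1
        and f="\<lambda>s. integral {0..s} h * exp_prim \<eta> s"]
    by auto
  then show ?thesis
    unfolding phi_num_one_minus[OF assms(1,3)]
    using assms by (simp add: abs_integral_primitive_mult_exp_prim_le)
qed

lemma phi_num_lin_add:
  assumes "continuous_on {0..1} \<eta>" "continuous_on {0..1} h" "continuous_on {0..1} g" "y \<in> {0..1}"
  shows "phi_num_lin \<eta> (\<lambda>t. h t + g t) y = phi_num_lin \<eta> h y + phi_num_lin \<eta> g y"
proof -
  have "phi_num_lin \<eta> (\<lambda>t. h t + g t) y
      = integral {0..y} (\<lambda>s. integral {0..s} h * exp_prim \<eta> s + integral {0..s} g * exp_prim \<eta> s)"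
    unfolding phi_num_lin_def
    using assms primitive_add[OF assms(2,3)] by (intro integral_cong) (auto simp: algebra_simps)
  also have "\<dots> = phi_num_lin \<eta> h y + phi_num_lin \<eta> g y"
    unfolding phi_num_lin_def using assms
    by (intro integral_add integrable_on_unit_subinterval continuous_intros) auto
  finally show ?thesis .
qed

lemma phi_num_lin_scale: "phi_num_lin \<eta> (\<lambda>t. c * h t) y = c * phi_num_lin \<eta> h y"
  unfolding phi_num_lin_def by (simp add: mult.assoc)

lemma dphi_eq:
  assumes "continuous_on {0..1} \<eta>" "continuous_on {0..1} h" "x \<in> {0..1}"
  shows "dphi \<eta> x h = (phi_num_lin \<eta> h x - phi \<eta> x * phi_num_lin \<eta> h 1) / phi_num \<eta> 1"
proof (cases "phi_num \<eta> x = 0")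
  case True
  \<comment> \<open>at x = 0 the first quotient in dphi_def is 0 / 0, which is 0 in Isabelle\<close>
  then have "phi_num_lin \<eta> h x = 0"
    using abs_phi_num_lin_le[OF assms] by simp
  with True show ?thesis
    by (simp add: dphi_def phi_eq_phi_num phi_num_def phi_num_lin_def exp_prim_def[abs_def])
next
  case False
  then show ?thesis
    using phi_num_one_pos[OF assms(1)]
    by (simp add: dphi_def phi_eq_phi_num phi_num_def phi_num_lin_def exp_prim_def[abs_def]
        field_simps)
qed

lemma abs_dphi_le:
  assumes \<eta>: "continuous_on {0..1} \<eta>" and h: "continuous_on {0..1} h" and x: "x \<in> {0..1}"
  shows "\<bar>dphi \<eta> x h\<bar> \<le> 2 * c0_norm h * (phi \<eta> x * (1 - phi \<eta> x))"
proof -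
  define A B p N where "A = phi_num \<eta>" and "B = phi_num_lin \<eta> h" and "p = phi \<eta> x"
    and "N = c0_norm h"
  have A1: "0 < A 1"
    using phi_num_one_pos[OF \<eta>] by (simp add: A_def)
  have Ax: "A x = p * A 1" and A1x: "A 1 - A x = (1 - p) * A 1"
    using A1 by (simp_all add: A_def p_def phi_eq_phi_num field_simps)
  have p: "0 \<le> p" "p \<le> 1"
    using phi_bounds[OF \<eta> x] by (simp_all add: p_def)
  have "\<bar>B x - p * B 1\<bar> = \<bar>(1 - p) * B x - p * (B 1 - B x)\<bar>"
    by (simp add: algebra_simps)
  also have "\<dots> \<le> (1 - p) * (N * A x) + p * (N * (A 1 - A x))"
    using abs_phi_num_lin_le[OF \<eta> h x] abs_phi_num_lin_one_minus_le[OF \<eta> h x] p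
    unfolding A_def B_def N_def
    by (intro order_trans[OF abs_triangle_ineq4] add_mono) (auto simp: abs_mult intro: mult_left_mono)
  also have "\<dots> = 2 * N * (p * (1 - p)) * A 1"
    unfolding A1x Ax by (simp add: algebra_simps)
  finally show ?thesis
    using A1 dphi_eq[OF \<eta> h x] by (simp add: A_def B_def p_def N_def pos_divide_le_eq)
qed

lemma abs_dphi_le_min:
  assumes \<eta>: "continuous_on {0..1} \<eta>" and x: "x \<in> {0..1}" and h: "h \<in> C0" "c0_norm h \<le> 1"
  shows "\<bar>dphi \<eta> x h\<bar> \<le> 2 * min (phi \<eta> x) (1 - phi \<eta> x)"
proof -
  have "\<bar>dphi \<eta> x h\<bar> \<le> 2 * c0_norm h * (phi \<eta> x * (1 - phi \<eta> x))"
    using h by (intro abs_dphi_le \<eta> x) (simp add: C0_def)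
  also have "\<dots> \<le> 2 * 1 * min (phi \<eta> x) (1 - phi \<eta> x)"
    using h c0_norm_nonneg[of h] phi_bounds[OF \<eta> x] min_compl_bounds(1)[of "phi \<eta> x"]
    by (intro mult_mono) (auto simp: C0_def)
  finally show ?thesis
    by simp
qed

lemma dphi_c0_bounded_linear:
  assumes \<eta>: "continuous_on {0..1} \<eta>" and x: "x \<in> {0..1}"
  shows "c0_bounded_linear (dphi \<eta> x)"
  unfolding c0_bounded_linear_def
proof (intro conjI ballI allI exI)
  fix h g
  assume "h \<in> C0" "g \<in> C0"
  then have "continuous_on {0..1} h" "continuous_on {0..1} g" "continuous_on {0..1} (\<lambda>t. h t + g t)"
    by (auto simp: C0_def intro: continuous_on_add)
  then show "dphi \<eta> x (\<lambda>t. h t + g t) = dphi \<eta> x h + dphi \<eta> x g"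
    using phi_num_lin_add[OF \<eta>, of h g] x
    by (simp add: dphi_eq[OF \<eta> _ x] add_divide_distrib diff_divide_distrib algebra_simps)
next
  fix h c
  assume "h \<in> C0"
  then have "continuous_on {0..1} h" "continuous_on {0..1} (\<lambda>t. c * h t)"
    by (auto simp: C0_def intro: continuous_on_mult_left)
  then show "dphi \<eta> x (\<lambda>t. c * h t) = c * dphi \<eta> x h"
    by (simp add: dphi_eq[OF \<eta> _ x] phi_num_lin_scale algebra_simps)
next
  fix h
  assume "h \<in> C0"
  then have h: "continuous_on {0..1} h"
    by (simp add: C0_def)
  have "phi \<eta> x * (1 - phi \<eta> x) \<le> 1"
    using phi_bounds[OF \<eta> x] by (simp add: mult_le_one)
  then have "2 * c0_norm h * (phi \<eta> x * (1 - phi \<eta> x)) \<le> 2 * c0_norm h"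
    using phi_bounds[OF \<eta> x] c0_norm_nonneg[OF h] by (intro mult_left_le) auto
  then show "\<bar>dphi \<eta> x h\<bar> \<le> 2 * c0_norm h"
    using abs_dphi_le[OF \<eta> h x] by linarith
qed

lemma abs_phi_linearization_error_le:
  assumes \<eta>: "continuous_on {0..1} \<eta>" and h: "continuous_on {0..1} h" and x: "x \<in> {0..1}"
    and small: "c0_norm h \<le> 1/8"
  shows "\<bar>phi (\<lambda>t. \<eta> t + h t) x - phi \<eta> x - dphi \<eta> x h\<bar> \<le> 8 * (c0_norm h)\<^sup>2"
proof -
  have one: "(1::real) \<in> {0..1}"
    by simp
  show ?thesis
    unfolding phi_eq_phi_num dphi_eq[OF \<eta> h x] phi_num_perturb[OF \<eta> h x] phi_num_perturb[OF \<eta> h one]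
  proof (rule abs_quotient_perturbation_le)
    show "0 \<le> phi_num \<eta> x" "phi_num \<eta> x \<le> phi_num \<eta> 1" "0 < phi_num \<eta> 1"
      using phi_num_nonneg[OF \<eta> x] phi_num_le_phi_num_one[OF \<eta> x] phi_num_one_pos[OF \<eta>] .
  qed (use small c0_norm_nonneg[OF h] abs_phi_num_lin_le[OF \<eta> h] abs_phi_num_rem_le[OF \<eta> h] x one in auto)
qed

lemma phi_has_c0_derivative:
  assumes x: "x \<in> {0..1}" and "\<eta> \<in> C0"
  shows "c0_has_derivative (\<lambda>\<eta>'. phi \<eta>' x) (dphi \<eta> x) \<eta>"
  unfolding c0_has_derivative_def
proof (intro conjI allI impI)
  have \<eta>: "continuous_on {0..1} \<eta>"
    using \<open>\<eta> \<in> C0\<close> by (simp add: C0_def)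
  then show "c0_bounded_linear (dphi \<eta> x)"
    using x by (rule dphi_c0_bounded_linear)
  fix e :: real
  assume "0 < e"
  show "\<exists>d>0. \<forall>h\<in>C0. c0_norm h < d \<longrightarrow>
      \<bar>phi (\<lambda>t. \<eta> t + h t) x - phi \<eta> x - dphi \<eta> x h\<bar> \<le> e * c0_norm h"
  proof (intro exI[of _ "min (1/8) (e/8)"] conjI ballI impI)
    show "0 < min (1/8) (e/8)"
      using \<open>0 < e\<close> by simp
    fix h
    assume "h \<in> C0" and small: "c0_norm h < min (1/8) (e/8)"
    then have h: "continuous_on {0..1} h"
      by (simp add: C0_def)
    have "\<bar>phi (\<lambda>t. \<eta> t + h t) x - phi \<eta> x - dphi \<eta> x h\<bar> \<le> 8 * (c0_norm h)\<^sup>2"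
      using small by (intro abs_phi_linearization_error_le \<eta> h x) simp
    also have "\<dots> \<le> e * c0_norm h"
      using small c0_norm_nonneg[OF h] mult_right_mono[of "8 * c0_norm h" e "c0_norm h"]
      by (simp add: power2_eq_square)
    finally show "\<bar>phi (\<lambda>t. \<eta> t + h t) x - phi \<eta> x - dphi \<eta> x h\<bar> \<le> e * c0_norm h" .
  qed
qed

section \<open>The second derivative and the lower bound\<close>

lemma exp_prim_has_real_derivative:
  assumes "continuous_on {0..1} \<eta>" "t \<in> {0..1}"
  shows "(exp_prim \<eta> has_real_derivative exp_prim \<eta> t * \<eta> t) (at t within {0..1})"
proof -
  have "((\<lambda>y. integral {0..y} \<eta>) has_real_derivative \<eta> t) (at t within {0..1})"
    using integral_has_vector_derivative[OF assms]
    by (simp add: has_real_derivative_iff_has_vector_derivative)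
  then show ?thesis
    unfolding exp_prim_def[abs_def] by (rule DERIV_chain2[OF DERIV_exp])
qed

lemma phi_has_real_derivative:
  assumes "continuous_on {0..1} \<eta>" "t \<in> {0..1}"
  shows "(phi \<eta> has_real_derivative exp_prim \<eta> t / phi_num \<eta> 1) (at t within {0..1})"
proof -
  have "(phi_num \<eta> has_real_derivative exp_prim \<eta> t) (at t within {0..1})"
    using integral_has_vector_derivative[OF continuous_on_exp_prim[OF assms(1)] assms(2)]
    by (simp add: phi_num_def[abs_def] has_real_derivative_iff_has_vector_derivative)
  then have "((\<lambda>y. phi_num \<eta> y / phi_num \<eta> 1) has_real_derivative exp_prim \<eta> t / phi_num \<eta> 1)
      (at t within {0..1})"
    by (rule DERIV_cdivide)
  then show ?thesis
    by (simp add: phi_eq_phi_num[abs_def])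
qed

lemma D2phi_eq:
  assumes "continuous_on {0..1} \<eta>" "t \<in> {0..1}"
  shows "D2phi \<eta> t = exp_prim \<eta> t * \<eta> t / phi_num \<eta> 1"
proof -
  have deriv_phi: "vector_derivative (phi \<eta>) (at u within {0..1}) = exp_prim \<eta> u / phi_num \<eta> 1"
    if "u \<in> {0..1}" for u
    using phi_has_real_derivative[OF assms(1) that] that
    by (intro vector_derivative_within_closed_interval)
      (auto simp: has_real_derivative_iff_has_vector_derivative)
  have "((\<lambda>u. exp_prim \<eta> u / phi_num \<eta> 1) has_vector_derivative exp_prim \<eta> t * \<eta> t / phi_num \<eta> 1)
      (at t within {0..1})"
    using DERIV_cdivide[OF exp_prim_has_real_derivative[OF assms]]
    by (simp add: has_real_derivative_iff_has_vector_derivative)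
  then have "((\<lambda>u. vector_derivative (phi \<eta>) (at u within {0..1})) has_vector_derivative
      exp_prim \<eta> t * \<eta> t / phi_num \<eta> 1) (at t within {0..1})"
    by (rule has_vector_derivative_transform_within[where d=1]) (use assms deriv_phi in auto)
  then show ?thesis
    unfolding D2phi_def using assms(2) by (intro vector_derivative_within_closed_interval) auto
qed

lemma continuous_on_D2phi:
  assumes "continuous_on {0..1} \<eta>"
  shows "continuous_on {0..1} (D2phi \<eta>)"
proof -
  have "continuous_on {0..1} (\<lambda>t. exp_prim \<eta> t * \<eta> t / phi_num \<eta> 1)"
    using assms phi_num_one_pos[OF assms] by (intro continuous_intros) auto
  then show ?thesis
    by (rule continuous_on_eq) (use D2phi_eq[OF assms] in auto)
qed

lemma abs_sub_integral_le_deriv_bound: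
  fixes f f' :: "real \<Rightarrow> real"
  assumes deriv: "\<And>t. t \<in> {0..1} \<Longrightarrow> (f has_real_derivative f' t) (at t within {0..1})"
    and bound: "\<And>t. t \<in> {0..1} \<Longrightarrow> \<bar>f' t\<bar> \<le> M"
    and t: "t \<in> {0..1}"
  shows "\<bar>f t - integral {0..1} f\<bar> \<le> M"
proof -
  have f: "continuous_on {0..1} f"
    using deriv by (rule DERIV_continuous_on)
  have close: "\<bar>f t - f s\<bar> \<le> M" if "s \<in> {0..1}" for s
  proof -
    have "\<bar>f t - f s\<bar> \<le> M * \<bar>t - s\<bar>"
      using field_differentiable_bound[of "{0..1}" f f' M t s] deriv bound t that by auto
    also have "\<dots> \<le> M"
      using bound[OF t] t that by (intro mult_left_le) auto
    finally show ?thesis .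
  qed
  have "f t - integral {0..1} f = integral {0..1} (\<lambda>s. f t - f s)"
    using f by (simp add: integral_diff integrable_continuous_real)
  also have "\<bar>\<dots>\<bar> \<le> M * integral {0..1} (\<lambda>_::real. 1)"
    using f close by (intro abs_integral_le_mult_integral integrable_continuous_real continuous_intros) auto
  finally show ?thesis
    by simp
qed

lemma abs_phi_deriv_sub_one_le:
  assumes "continuous_on {0..1} \<eta>" "t \<in> {0..1}"
  shows "\<bar>exp_prim \<eta> t / phi_num \<eta> 1 - 1\<bar> \<le> c0_norm (D2phi \<eta>)"
proof -
  have "integral {0..1} (\<lambda>u. exp_prim \<eta> u / phi_num \<eta> 1) = 1"
    using phi_num_one_pos[OF assms(1)] by (simp add: phi_num_def)
  moreover have "\<bar>exp_prim \<eta> t / phi_num \<eta> 1 - integral {0..1} (\<lambda>u. exp_prim \<eta> u / phi_num \<eta> 1)\<bar>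
      \<le> c0_norm (D2phi \<eta>)"
  proof (rule abs_sub_integral_le_deriv_bound[OF _ _ assms(2)])
    fix u :: real
    assume u: "u \<in> {0..1}"
    show "((\<lambda>u. exp_prim \<eta> u / phi_num \<eta> 1) has_real_derivative D2phi \<eta> u) (at u within {0..1})"
      using DERIV_cdivide[OF exp_prim_has_real_derivative[OF assms(1) u]] D2phi_eq[OF assms(1) u] by simp
    show "\<bar>D2phi \<eta> u\<bar> \<le> c0_norm (D2phi \<eta>)"
      by (rule abs_le_c0_norm[OF continuous_on_D2phi[OF assms(1)] u])
  qed
  ultimately show ?thesis
    by simp
qed

lemma moment_gap_arith:
  fixes x p q1 q2 :: real
  assumes x: "0 \<le> x" "x \<le> 1"
    and p: "19/20 * x \<le> p" "p \<le> 21/20 * x" "19/20 * (1 - x) \<le> 1 - p" "1 - p \<le> 21/20 * (1 - x)"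
    and q: "q1 \<le> 21/20 * (x\<^sup>2 / 2)" "19/20 * ((1 - x\<^sup>2) / 2) \<le> q2"
  shows "min p (1 - p) / 8 \<le> p * q2 - (1 - p) * q1"
proof -
  have p01: "0 \<le> p" "p \<le> 1"
    using x p by linarith+
  have "19/20 * x * (19/20 * ((1 - x\<^sup>2) / 2)) \<le> p * q2"
    using x p q p01 by (intro mult_mono) (auto simp: power_le_one)
  moreover have "(1 - p) * q1 \<le> 21/20 * (1 - x) * (21/20 * (x\<^sup>2 / 2))"
  proof -
    have "(1 - p) * q1 \<le> (1 - p) * (21/20 * (x\<^sup>2 / 2))"
      using q p01 by (intro mult_left_mono) auto
    also have "\<dots> \<le> 21/20 * (1 - x) * (21/20 * (x\<^sup>2 / 2))"
      using p by (intro mult_right_mono) auto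
    finally show ?thesis .
  qed
  moreover have "p * (1 - p) \<le> 21/20 * x * (21/20 * (1 - x))"
    using x p p01 by (intro mult_mono) auto
  moreover have "x\<^sup>2 * (1 - x) \<le> x * (1 - x)"
    using x by (intro mult_right_mono) (auto simp: power2_eq_square mult_left_le_one_le)
  moreover have "0 \<le> x * (1 - x)"
    using x by simp
  moreover have "min p (1 - p) \<le> 2 * (p * (1 - p))"
    using min_compl_bounds(2) p01 by blast
  ultimately show ?thesis
    by (simp add: algebra_simps power2_eq_square)
qed

lemma integral_bounds_of_abs_sub_one_le:
  fixes v :: "real \<Rightarrow> real"
  assumes v: "continuous_on {0..1} v" and yz: "0 \<le> y" "y \<le> z" "z \<le> 1"
    and close: "\<And>s. s \<in> {y..z} \<Longrightarrow> \<bar>v s - 1\<bar> \<le> \<delta>"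
  shows "(1 - \<delta>) * (z - y) \<le> integral {y..z} v" and "integral {y..z} v \<le> (1 + \<delta>) * (z - y)"
    and "(1 - \<delta>) * ((z\<^sup>2 - y\<^sup>2) / 2) \<le> integral {y..z} (\<lambda>s. s * v s)"
    and "integral {y..z} (\<lambda>s. s * v s) \<le> (1 + \<delta>) * ((z\<^sup>2 - y\<^sup>2) / 2)"
proof -
  have sv: "continuous_on {0..1} (\<lambda>s. s * v s)"
    using v by (intro continuous_on_mult continuous_on_id)
  have v_bounds: "1 - \<delta> \<le> v s" "v s \<le> 1 + \<delta>" if "s \<in> {y..z}" for s
    using close[OF that] by (simp_all add: abs_le_iff)
  have "integral {y..z} (\<lambda>_. 1 - \<delta>) \<le> integral {y..z} v"
    using v yz v_bounds by (intro integral_le_on_unit_subinterval) auto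
  then show "(1 - \<delta>) * (z - y) \<le> integral {y..z} v"
    using yz by (simp add: mult.commute)
  have "integral {y..z} v \<le> integral {y..z} (\<lambda>_. 1 + \<delta>)"
    using v yz v_bounds by (intro integral_le_on_unit_subinterval) auto
  then show "integral {y..z} v \<le> (1 + \<delta>) * (z - y)"
    using yz by (simp add: mult.commute)
  have "integral {y..z} (\<lambda>s. (1 - \<delta>) * s) \<le> integral {y..z} (\<lambda>s. s * v s)"
    using sv yz v_bounds
    by (intro integral_le_on_unit_subinterval continuous_on_mult_left continuous_on_id)
      (auto simp: mult.commute intro: mult_left_mono)
  then show "(1 - \<delta>) * ((z\<^sup>2 - y\<^sup>2) / 2) \<le> integral {y..z} (\<lambda>s. s * v s)"
    using yz by simp
  have "integral {y..z} (\<lambda>s. s * v s) \<le> integral {y..z} (\<lambda>s. (1 + \<delta>) * s)"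
    using sv yz v_bounds
    by (intro integral_le_on_unit_subinterval continuous_on_mult_left continuous_on_id)
      (auto simp: mult.commute intro: mult_left_mono)
  then show "integral {y..z} (\<lambda>s. s * v s) \<le> (1 + \<delta>) * ((z\<^sup>2 - y\<^sup>2) / 2)"
    using yz by simp
qed

lemma moment_gap_lower_bound:
  fixes v :: "real \<Rightarrow> real"
  assumes v: "continuous_on {0..1} v" and x: "x \<in> {0..1}" and mass: "integral {0..1} v = 1"
    and close: "\<And>s. s \<in> {0..1} \<Longrightarrow> \<bar>v s - 1\<bar> \<le> 1/20"
  shows "min (integral {0..x} v) (1 - integral {0..x} v) / 8
    \<le> integral {0..x} v * integral {0..1} (\<lambda>s. s * v s) - integral {0..x} (\<lambda>s. s * v s)"
proof -
  have sv: "continuous_on {0..1} (\<lambda>s. s * v s)"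
    using v by (intro continuous_on_mult continuous_on_id)
  have "integral {0..x} v + integral {x..1} v = 1"
    using mass x integrable_on_unit_subinterval[OF v, of 0 1]
    by (simp add: Henstock_Kurzweil_Integration.integral_combine)
  moreover have "integral {0..1} (\<lambda>s. s * v s)
      = integral {0..x} (\<lambda>s. s * v s) + integral {x..1} (\<lambda>s. s * v s)"
    using x integrable_on_unit_subinterval[OF sv, of 0 1]
    by (simp add: Henstock_Kurzweil_Integration.integral_combine)
  moreover have "min (integral {0..x} v) (1 - integral {0..x} v) / 8
      \<le> integral {0..x} v * integral {x..1} (\<lambda>s. s * v s)
        - (1 - integral {0..x} v) * integral {0..x} (\<lambda>s. s * v s)"
  proof (rule moment_gap_arith)
    have x01: "0 \<le> x" "x \<le> 1"
      using x by auto
    have "\<bar>v s - 1\<bar> \<le> 1/20" if "s \<in> {0..x}" for s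
      using close that x01 by auto
    note left = integral_bounds_of_abs_sub_one_le[OF v order_refl x01 this]
    have "\<bar>v s - 1\<bar> \<le> 1/20" if "s \<in> {x..1}" for s
      using close that x01 by auto
    note right = integral_bounds_of_abs_sub_one_le[OF v x01 order_refl this]
    show "0 \<le> x" "x \<le> 1"
      by (fact x01)+
    show "19/20 * x \<le> integral {0..x} v" "integral {0..x} v \<le> 21/20 * x"
      "integral {0..x} (\<lambda>s. s * v s) \<le> 21/20 * (x\<^sup>2 / 2)"
      using left by simp_all
    show "19/20 * (1 - x) \<le> 1 - integral {0..x} v" "1 - integral {0..x} v \<le> 21/20 * (1 - x)"
      "19/20 * ((1 - x\<^sup>2) / 2) \<le> integral {x..1} (\<lambda>s. s * v s)"
      using right calculation(1) by simp_all
  qed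
  ultimately show ?thesis
    by (simp add: algebra_simps)
qed

lemma dphi_one_eq:
  assumes \<eta>: "continuous_on {0..1} \<eta>" and x: "x \<in> {0..1}"
  defines "v \<equiv> \<lambda>s. exp_prim \<eta> s / phi_num \<eta> 1"
  shows "phi \<eta> x = integral {0..x} v"
    and "dphi \<eta> x (\<lambda>t. 1) = integral {0..x} (\<lambda>s. s * v s) - phi \<eta> x * integral {0..1} (\<lambda>s. s * v s)"
proof -
  show "phi \<eta> x = integral {0..x} v"
    by (simp add: v_def phi_eq_phi_num phi_num_def)
  have "phi_num_lin \<eta> (\<lambda>t. 1) y = integral {0..y} (\<lambda>s. s * exp_prim \<eta> s)" if "0 \<le> y" for y
    unfolding phi_num_lin_def using that by (intro integral_cong) auto
  then show "dphi \<eta> x (\<lambda>t. 1) = integral {0..x} (\<lambda>s. s * v s) - phi \<eta> x * integral {0..1} (\<lambda>s. s * v s)"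
    using x by (simp add: dphi_eq[OF \<eta> _ x] v_def diff_divide_distrib)
qed

lemma min_phi_le_abs_dphi_one:
  assumes \<eta>: "continuous_on {0..1} \<eta>" and x: "x \<in> {0..1}" and small: "c0_norm (D2phi \<eta>) \<le> 1/20"
  shows "min (phi \<eta> x) (1 - phi \<eta> x) / 8 \<le> \<bar>dphi \<eta> x (\<lambda>t. 1)\<bar>"
proof -
  define v where "v = (\<lambda>s. exp_prim \<eta> s / phi_num \<eta> 1)"
  have phi_dphi: "phi \<eta> x = integral {0..x} v"
    "dphi \<eta> x (\<lambda>t. 1) = integral {0..x} (\<lambda>s. s * v s) - phi \<eta> x * integral {0..1} (\<lambda>s. s * v s)"
    unfolding v_def by (rule dphi_one_eq[OF \<eta> x])+
  have "min (integral {0..x} v) (1 - integral {0..x} v) / 8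
    \<le> integral {0..x} v * integral {0..1} (\<lambda>s. s * v s) - integral {0..x} (\<lambda>s. s * v s)"
  proof (rule moment_gap_lower_bound[OF _ x])
    show "continuous_on {0..1} v"
      unfolding v_def using \<eta> phi_num_one_pos[OF \<eta>] by (intro continuous_intros) auto
    show "integral {0..1} v = 1"
      unfolding v_def using phi_num_one_pos[OF \<eta>] by (simp add: phi_num_def)
    show "\<bar>v s - 1\<bar> \<le> 1/20" if "s \<in> {0..1}" for s
      unfolding v_def using abs_phi_deriv_sub_one_le[OF \<eta> that] small by linarith
  qed
  also have "\<dots> = - dphi \<eta> x (\<lambda>t. 1)"
    unfolding phi_dphi by simp
  also have "\<dots> \<le> \<bar>dphi \<eta> x (\<lambda>t. 1)\<bar>"
    by simp
  finally show ?thesis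
    unfolding phi_dphi(1) .
qed

theorem mainTheorem5:
  fixes x :: real
  assumes "x \<in> {0..1}"
  shows "(\<forall>\<eta>\<in>C0. c0_has_derivative (\<lambda>\<eta>'. phi \<eta>' x) (dphi \<eta> x) \<eta>) \<and>
         (\<exists>\<epsilon>0>0. \<forall>\<epsilon>. 0 < \<epsilon> \<and> \<epsilon> < \<epsilon>0 \<longrightarrow>
            (\<forall>\<eta>\<in>C0. c0_norm (D2phi \<eta>) < \<epsilon> \<longrightarrow>
               1/8 * min (phi \<eta> x) (1 - phi \<eta> x) \<le> c0_opnorm (dphi \<eta> x) \<and>
               c0_opnorm (dphi \<eta> x) \<le> 2 * min (phi \<eta> x) (1 - phi \<eta> x)))"
proof (intro conjI ballI exI[of _ "1/20"] allI impI)
  fix \<eta>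
  assume "\<eta> \<in> C0"
  then show "c0_has_derivative (\<lambda>\<eta>'. phi \<eta>' x) (dphi \<eta> x) \<eta>"
    by (rule phi_has_c0_derivative[OF assms])
next
  show "(0::real) < 1/20"
    by simp
next
  fix \<epsilon> :: real and \<eta>
  assume \<epsilon>: "0 < \<epsilon> \<and> \<epsilon> < 1/20" and "\<eta> \<in> C0" and small: "c0_norm (D2phi \<eta>) < \<epsilon>"
  then have \<eta>: "continuous_on {0..1} \<eta>"
    by (simp add: C0_def)
  note unit_ball_bound = abs_dphi_le_min[OF \<eta> assms]
  have "1/8 * min (phi \<eta> x) (1 - phi \<eta> x) \<le> \<bar>dphi \<eta> x (\<lambda>t. 1)\<bar>"
    using min_phi_le_abs_dphi_one[OF \<eta> assms] small \<epsilon> by simp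
  also have "\<dots> \<le> c0_opnorm (dphi \<eta> x)"
    by (rule abs_le_c0_opnorm[OF unit_ball_bound]) (simp_all add: C0_def)
  finally show "1/8 * min (phi \<eta> x) (1 - phi \<eta> x) \<le> c0_opnorm (dphi \<eta> x)" .
  show "c0_opnorm (dphi \<eta> x) \<le> 2 * min (phi \<eta> x) (1 - phi \<eta> x)"
    by (rule c0_opnorm_le[OF unit_ball_bound])
qed

end
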